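(* The mapping $\Delta$ is a bijection between covered maps and left-connected oriented maps.
   Context: Permutations are composed right to left. A (rooted) map is a triple $M=(H,\sigma,\alpha)$ with $H$ a finite set of half-edges, $\alpha$ a fixed-point-free involution, $\sigma$ a permutation, $\langle\sigma,\alpha\rangle$ transitive on $H$, and a root $r\in H$; maps are considered up to root-preserving relabelling. Cycles of $\sigma$, $\alpha$, $\phi=\sigma\alpha$ are vertices, edges, faces. For $S\subseteq H$ and a permutation $\pi$, $\pi_{|S}$ is the permutation of $S$ obtained by erasing elements not in $S$ from the cycles of $\pi$. A spanned map $(M,S)$ has $S\subseteq H$ stable by $\alpha$; it is a covered map if $(S,\sigma_{|S},\alpha_{|S})$ is a connecting unicellular map ($\sigma_{|S},\alpha_{|S}$ transitive on $S$, $S$ meets every cycle of $\sigma$ — except $S=\emptyset$ is allowed if $M$ has one vertex — and $\sigma_{|S}\alpha_{|S}$ is cyclic). Its motion function $\theta(h)=\sigma\alpha(h)$ for $h\in S$, $\theta(h)=\sigma(h)$ otherwise, is cyclic for covered maps, and the appearance order is $r\prec_S\theta(r)\prec_S\cdots\prec_S\theta^{|H|-1}(r)$. An oriented map is $(M,(I,O))$ with $H=I\uplus O$ and $\alpha(I)=O$. $\Delta(M,S)=(M,(I,O))$ with $I=\{h\in S:\alpha(h)\prec_S h\}\cup\{h\notin S:h\prec_S\alpha(h)\}$, $O=H\setminus I$. Let $h_0=r$ be the root. A left-path is a sequence $h_1,\dots,h_k$ of half-edges of $I$ such that for each $j=1,\dots,k$ there is an integer $q_j>0$ with $h_{j-1}=\sigma^{q_j}(\alpha(h_j))$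 and $\sigma^p(\alpha(h_j))\in O$ for all $p=0,\dots,q_j-1$. The oriented map is left-connected if every $h\in I$ is the last element $h_k$ of some left-path. *)

theory Defs
  imports "HOL-Combinatorics.Permutations"
begin

text \<open>A rooted map on a finite set H of half-edges: sigma a permutation of H,
  alpha a fixed-point-free involution of H, the group generated by sigma and
  alpha transitive on H (for finite H this is reachability under sigma and alpha),
  and a root r in H.\<close>

definition gen_rel :: "('a \<Rightarrow> 'a) \<Rightarrow> ('a \<Rightarrow> 'a) \<Rightarrow> ('a \<times> 'a) set" where
  "gen_rel f g = {(x, f x) | x. True} \<union> {(x, g x) | x. True}"

definition transitive_on :: "'a set \<Rightarrow> ('a \<Rightarrow> 'a) \<Rightarrow> ('a \<Rightarrow> 'a) \<Rightarrow> bool" where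
  "transitive_on S f g \<longleftrightarrow> (\<forall>x\<in>S. \<forall>y\<in>S. (x, y) \<in> (gen_rel f g)\<^sup>*)"

definition cyclic_on :: "'a set \<Rightarrow> ('a \<Rightarrow> 'a) \<Rightarrow> bool" where
  "cyclic_on S f \<longleftrightarrow> (\<forall>x\<in>S. \<forall>y\<in>S. \<exists>k. (f ^^ k) x = y)"

definition rooted_map :: "'a set \<Rightarrow> ('a \<Rightarrow> 'a) \<Rightarrow> ('a \<Rightarrow> 'a) \<Rightarrow> 'a \<Rightarrow> bool" where
  "rooted_map H \<sigma> \<alpha> r \<longleftrightarrow>
     finite H \<and> \<sigma> permutes H \<and> \<alpha> permutes H \<and>
     (\<forall>h\<in>H. \<alpha> h \<noteq> h \<and> \<alpha> (\<alpha> h) = h) \<and>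
     transitive_on H \<sigma> \<alpha> \<and> r \<in> H"

text \<open>Restriction pi_{|S}: erase elements not in S from the cycles of pi.\<close>
definition restr :: "('a \<Rightarrow> 'a) \<Rightarrow> 'a set \<Rightarrow> 'a \<Rightarrow> 'a" where
  "restr \<pi> S h = (if h \<in> S then (\<pi> ^^ (LEAST k. 0 < k \<and> (\<pi> ^^ k) h \<in> S)) h else h)"

definition connecting_unicellular ::
  "'a set \<Rightarrow> ('a \<Rightarrow> 'a) \<Rightarrow> ('a \<Rightarrow> 'a) \<Rightarrow> 'a set \<Rightarrow> bool" where
  "connecting_unicellular H \<sigma> \<alpha> S \<longleftrightarrow>
     transitive_on S (restr \<sigma> S) (restr \<alpha> S) \<and>
     ((\<forall>h\<in>H. \<exists>k. (\<sigma> ^^ k) h \<in> S) \<or> (S = {} \<and> cyclic_on H \<sigma>)) \<and>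
     cyclic_on S (restr \<sigma> S \<circ> restr \<alpha> S)"

definition covered_map :: "'a set \<Rightarrow> ('a \<Rightarrow> 'a) \<Rightarrow> ('a \<Rightarrow> 'a) \<Rightarrow> 'a \<Rightarrow> 'a set \<Rightarrow> bool" where
  "covered_map H \<sigma> \<alpha> r S \<longleftrightarrow>
     S \<subseteq> H \<and> (\<forall>h\<in>S. \<alpha> h \<in> S) \<and> connecting_unicellular H \<sigma> \<alpha> S"

definition motion :: "('a \<Rightarrow> 'a) \<Rightarrow> ('a \<Rightarrow> 'a) \<Rightarrow> 'a set \<Rightarrow> 'a \<Rightarrow> 'a" where
  "motion \<sigma> \<alpha> S h = (if h \<in> S then \<sigma> (\<alpha> h) else \<sigma> h)"

definition appearance_index :: "('a \<Rightarrow> 'a) \<Rightarrow> ('a \<Rightarrow> 'a) \<Rightarrow> 'a \<Rightarrow> 'a set \<Rightarrow> 'a \<Rightarrow> nat" where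
  "appearance_index \<sigma> \<alpha> r S h = (LEAST k. (motion \<sigma> \<alpha> S ^^ k) r = h)"

definition appears_before :: "('a \<Rightarrow> 'a) \<Rightarrow> ('a \<Rightarrow> 'a) \<Rightarrow> 'a \<Rightarrow> 'a set \<Rightarrow> 'a \<Rightarrow> 'a \<Rightarrow> bool" where
  "appears_before \<sigma> \<alpha> r S h h' \<longleftrightarrow>
     appearance_index \<sigma> \<alpha> r S h < appearance_index \<sigma> \<alpha> r S h'"

text \<open>The mapping Delta: returns the set I of the orientation (I, O), O = H - I.\<close>
definition Delta :: "'a set \<Rightarrow> ('a \<Rightarrow> 'a) \<Rightarrow> ('a \<Rightarrow> 'a) \<Rightarrow> 'a \<Rightarrow> 'a set \<Rightarrow> 'a set" where
  "Delta H \<sigma> \<alpha> r S =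
     {h \<in> S. appears_before \<sigma> \<alpha> r S (\<alpha> h) h} \<union>
     {h \<in> H - S. appears_before \<sigma> \<alpha> r S h (\<alpha> h)}"

definition oriented_map :: "'a set \<Rightarrow> ('a \<Rightarrow> 'a) \<Rightarrow> 'a set \<Rightarrow> bool" where
  "oriented_map H \<alpha> I \<longleftrightarrow> I \<subseteq> H \<and> \<alpha> ` I = H - I"

definition left_step :: "'a set \<Rightarrow> ('a \<Rightarrow> 'a) \<Rightarrow> ('a \<Rightarrow> 'a) \<Rightarrow> 'a set \<Rightarrow> 'a \<Rightarrow> 'a \<Rightarrow> bool" where
  "left_step H \<sigma> \<alpha> I prev h \<longleftrightarrow>
     (\<exists>q>0. prev = (\<sigma> ^^ q) (\<alpha> h) \<and> (\<forall>p<q. (\<sigma> ^^ p) (\<alpha> h) \<in> H - I))"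

definition left_path :: "'a set \<Rightarrow> ('a \<Rightarrow> 'a) \<Rightarrow> ('a \<Rightarrow> 'a) \<Rightarrow> 'a \<Rightarrow> 'a set \<Rightarrow> 'a list \<Rightarrow> bool" where
  "left_path H \<sigma> \<alpha> r I hs \<longleftrightarrow>
     hs \<noteq> [] \<and> set hs \<subseteq> I \<and>
     (\<forall>j < length hs. left_step H \<sigma> \<alpha> I (if j = 0 then r else hs ! (j - 1)) (hs ! j))"

definition left_connected :: "'a set \<Rightarrow> ('a \<Rightarrow> 'a) \<Rightarrow> ('a \<Rightarrow> 'a) \<Rightarrow> 'a \<Rightarrow> 'a set \<Rightarrow> bool" where
  "left_connected H \<sigma> \<alpha> r I \<longleftrightarrow>
     (\<forall>h\<in>I. \<exists>hs. left_path H \<sigma> \<alpha> r I hs \<and> last hs = h)"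

end

theory Submission
  imports Defs
begin

text \<open>A spanned map S is covered exactly when S is \<alpha>-stable and its motion function \<theta> is a
  single cycle on H, i.e. the tour r, \<theta> r, \<theta> (\<theta> r), ... visits every half-edge. For each
  edge, \<Delta> records which of its two half-edges the tour meets first, and whether that one lies
  in S. Conversely, an orientation I determines S step by step along the tour: whenever the tour
  reaches an edge for the first time, the current half-edge must be in S iff it is outgoing. This
  gives injectivity, and run on an arbitrary orientation it produces the candidate preimage.
  Left-connectivity matches coverage: rotating around a vertex from \<alpha> h, h incoming, through
  outgoing half-edges, the tour positions strictly increase, so one reaches the root or an incoming
  half-edge visited later; this builds the left-paths of \<Delta> S backwards. Conversely, for a
  left-connected orientation a half-edge missed by the greedy tour would propagate along left-paths
  back to the root, which is impossible.\<close>

definition forward_orbit :: "('a \<Rightarrow> 'a) \<Rightarrow> 'a \<Rightarrow> 'a set" where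
  "forward_orbit f x = range (\<lambda>k. (f ^^ k) x)"

lemma funpow_in_forward_orbit [simp, intro]: "(f ^^ k) x \<in> forward_orbit f x"
  unfolding forward_orbit_def by blast

lemma self_in_forward_orbit [simp, intro]: "x \<in> forward_orbit f x"
  using funpow_in_forward_orbit[where k = 0] by simp

lemma forward_orbit_funpow_closed:
  "y \<in> forward_orbit f x \<Longrightarrow> (f ^^ n) y \<in> forward_orbit f x"
proof -
  assume "y \<in> forward_orbit f x"
  then obtain k where "y = (f ^^ k) x" unfolding forward_orbit_def by blast
  then have "(f ^^ n) y = (f ^^ (n + k)) x" by (simp add: funpow_add)
  then show ?thesis by simp
qed

lemma forward_orbit_subset:
  "f permutes A \<Longrightarrow> x \<in> A \<Longrightarrow> forward_orbit f x \<subseteq> A"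
  unfolding forward_orbit_def by (auto intro: permutes_in_funpow_image)

lemma forward_orbit_pred:
  assumes "f permutes A" "finite A" "f y \<in> forward_orbit f x"
  shows "y \<in> forward_orbit f x"
proof -
  have perm: "permutation f" using assms(1,2) permutation_permutes by blast
  obtain k where k: "f y = (f ^^ k) x" using assms(3) unfolding forward_orbit_def by blast
  obtain n where n: "n > 0" "(f ^^ n) x = x" using perm by (rule permutation_self)
  have "f ((f ^^ (k + n - 1)) x) = (f ^^ (k + n)) x"
    using n(1) by (metis Suc_diff_1 add_gr_0 comp_apply funpow.simps(2))
  also have "\<dots> = (f ^^ k) ((f ^^ n) x)" by (simp add: funpow_add)
  also have "\<dots> = f y" using k n(2) by simp
  finally have "y = (f ^^ (k + n - 1)) x"
    using permutation_bijective[OF perm] by (auto dest: bij_is_inj injD)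
  then show ?thesis by simp
qed

lemma cyclic_on_if_forward_orbit:
  assumes "f permutes A" "finite A" "A \<subseteq> forward_orbit f x"
  shows "cyclic_on A f"
  unfolding cyclic_on_def
proof (intro ballI)
  fix y z assume "y \<in> A" "z \<in> A"
  then obtain a b where a: "y = (f ^^ a) x" and b: "z = (f ^^ b) x"
    using assms(3) unfolding forward_orbit_def by blast
  have "permutation f" using assms(1,2) permutation_permutes by blast
  then obtain n where n: "n > 0" "(f ^^ n) x = x" by (rule permutation_self)
  have "(f ^^ (n * a)) x = x"
    by (induction a) (simp_all add: funpow_add n(2))
  moreover have "n * a - a + a = n * a" using n(1) by (cases n) auto
  ultimately have "(f ^^ (n * a - a)) y = x" using a by (metis comp_apply funpow_add)
  then have "(f ^^ (b + (n * a - a))) y = z" using b by (simp add: funpow_add)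
  then show "\<exists>k. (f ^^ k) y = z" ..
qed

lemma funpow_least_index_lt_card:
  fixes f :: "'a \<Rightarrow> 'a"
  assumes "finite A" and in_A: "\<And>n. (f ^^ n) x \<in> A" and "(f ^^ k) x = y"
  shows "(LEAST n. (f ^^ n) x = y) < card A"
proof -
  define m where "m = (LEAST n. (f ^^ n) x = y)"
  have m: "(f ^^ m) x = y" unfolding m_def using assms(3) by (rule LeastI)
  have shortcut: False if "i < j" "j \<le> m" "(f ^^ i) x = (f ^^ j) x" for i j
  proof -
    have "(f ^^ (m - j + i)) x = (f ^^ (m - j)) ((f ^^ j) x)" using that(3) by (simp add: funpow_add)
    also have "\<dots> = y" using m that(2) by (metis comp_apply funpow_add le_add_diff_inverse2)
    finally have "m \<le> m - j + i" unfolding m_def by (rule Least_le)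
    then show False using that by linarith
  qed
  have "inj_on (\<lambda>n. (f ^^ n) x) {..m}"
    by (rule inj_onI) (metis atMost_iff linorder_neqE_nat shortcut)
  then have "card {..m} \<le> card A" using in_A assms(1) by (intro card_inj_on_le) auto
  then show ?thesis unfolding m_def by simp
qed

lemma transitive_on_if_cyclic_comp:
  assumes "cyclic_on S (f \<circ> g)"
  shows "transitive_on S f g"
  unfolding transitive_on_def
proof (intro ballI)
  fix x y assume "x \<in> S" "y \<in> S"
  then obtain k where k: "((f \<circ> g) ^^ k) x = y" using assms unfolding cyclic_on_def by blast
  have step: "(z, f (g z)) \<in> (gen_rel f g)\<^sup>*" for z
  proof -
    have "(z, g z) \<in> gen_rel f g" "(g z, f (g z)) \<in> gen_rel f g" unfolding gen_rel_def by blast+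
    then show ?thesis by simp
  qed
  have "(x, ((f \<circ> g) ^^ k) x) \<in> (gen_rel f g)\<^sup>*"
    by (induction k) (auto intro: rtrancl_trans[OF _ step])
  then show "(x, y) \<in> (gen_rel f g)\<^sup>*" using k by simp
qed

lemma motion_empty [simp]: "motion \<sigma> \<alpha> {} = \<sigma>"
  by (rule ext) (simp add: motion_def)

lemma motion_funpow_avoiding:
  assumes "\<And>i. i < j \<Longrightarrow> (\<sigma> ^^ i) h \<notin> S"
  shows "(motion \<sigma> \<alpha> S ^^ j) h = (\<sigma> ^^ j) h"
  using assms by (induction j) (simp_all add: motion_def)

lemma motion_funpow_cong:
  assumes "\<And>i. i < j \<Longrightarrow> (motion \<sigma> \<alpha> S ^^ i) h \<in> S \<longleftrightarrow> (motion \<sigma> \<alpha> S ^^ i) h \<in> S'"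
  shows "(motion \<sigma> \<alpha> S' ^^ j) h = (motion \<sigma> \<alpha> S ^^ j) h"
  using assms by (induction j) (simp_all add: motion_def)

lemma mem_if_sigma_funpow_mem:
  assumes "S \<subseteq> V" and "\<And>y. motion \<sigma> \<alpha> S y \<in> V \<Longrightarrow> y \<in> V" and "(\<sigma> ^^ k) h \<in> V"
  shows "h \<in> V"
  using assms(3)
proof (induction k arbitrary: h)
  case (Suc k)
  then have "\<sigma> h \<in> V" by (simp add: funpow_swap1)
  show ?case
  proof (cases "h \<in> S")
    case False
    then have "motion \<sigma> \<alpha> S h \<in> V" using \<open>\<sigma> h \<in> V\<close> by (simp add: motion_def)
    then show ?thesis by (rule assms(2))
  qed (use assms(1) in blast)
qed simp

lemma left_pathD:
  assumes "left_path H \<sigma> \<alpha> r I hs"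
  shows left_path_nonempty: "hs \<noteq> []" and left_path_subset: "set hs \<subseteq> I"
    and left_path_step: "j < length hs \<Longrightarrow> left_step H \<sigma> \<alpha> I (if j = 0 then r else hs ! (j - 1)) (hs ! j)"
proof -
  have *: "hs \<noteq> [] \<and> set hs \<subseteq> I \<and>
      (\<forall>j<length hs. left_step H \<sigma> \<alpha> I (if j = 0 then r else hs ! (j - 1)) (hs ! j))"
    using assms unfolding left_path_def .
  show "hs \<noteq> []" using * by (rule conjunct1)
  show "set hs \<subseteq> I" using * by (rule conjunct2[THEN conjunct1])
  show "left_step H \<sigma> \<alpha> I (if j = 0 then r else hs ! (j - 1)) (hs ! j)" if "j < length hs"
    using *[THEN conjunct2, THEN conjunct2, rule_format, OF that] .
qed

lemma left_path_singleton: "h \<in> I \<Longrightarrow> left_step H \<sigma> \<alpha> I r h \<Longrightarrow> left_path H \<sigma> \<alpha> r I [h]"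
  unfolding left_path_def by simp

lemma left_path_snoc:
  assumes path: "left_path H \<sigma> \<alpha> r I hs" and "h \<in> I" and last: "left_step H \<sigma> \<alpha> I (last hs) h"
  shows "left_path H \<sigma> \<alpha> r I (hs @ [h])"
proof -
  have ne: "hs \<noteq> []" using left_path_nonempty[OF path] .
  have "left_step H \<sigma> \<alpha> I (if j = 0 then r else (hs @ [h]) ! (j - 1)) ((hs @ [h]) ! j)"
    if j: "j < length (hs @ [h])" for j
  proof (cases "j < length hs")
    case True
    then show ?thesis using left_path_step[OF path True] by (cases j) (simp_all add: nth_append)
  next
    case False
    then have "j = length hs" using j by simp
    moreover have "j \<noteq> 0" using ne calculation by simp
    ultimately show ?thesis using last ne by (simp add: nth_append last_conv_nth)
  qed
  moreover have "set (hs @ [h]) \<subseteq> I" using left_path_subset[OF path] \<open>h \<in> I\<close> by simp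
  ultimately show ?thesis unfolding left_path_def by blast
qed

lemma left_path_last_step:
  assumes path: "left_path H \<sigma> \<alpha> r I hs"
  obtains prev where "prev = r \<or> prev \<in> I" "left_step H \<sigma> \<alpha> I prev (last hs)"
proof -
  let ?j = "length hs - 1"
  have ne: "hs \<noteq> []" using left_path_nonempty[OF path] .
  then have "left_step H \<sigma> \<alpha> I (if ?j = 0 then r else hs ! (?j - 1)) (last hs)"
    using left_path_step[OF path, of ?j] by (simp add: last_conv_nth)
  moreover have "hs ! (?j - 1) \<in> I" if "?j \<noteq> 0"
    using that left_path_subset[OF path] by (simp add: subset_iff)
  ultimately show thesis using that by (metis (full_types))
qed

lemma left_path_propagate:
  assumes path: "left_path H \<sigma> \<alpha> r I hs" and "P r"
    and step: "\<And>prev h. P prev \<Longrightarrow> h \<in> I \<Longrightarrow> left_step H \<sigma> \<alpha> I prev h \<Longrightarrow> P h"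
  shows "P (last hs)"
proof -
  have "P (hs ! j)" if "j < length hs" for j
    using that
  proof (induction j)
    case 0
    have "left_step H \<sigma> \<alpha> I r (hs ! 0)" using left_path_step[OF path 0] by simp
    moreover have "hs ! 0 \<in> I" using 0 left_path_subset[OF path] by (meson nth_mem subsetD)
    ultimately show ?case using step \<open>P r\<close> by blast
  next
    case (Suc j)
    have "left_step H \<sigma> \<alpha> I (hs ! j) (hs ! Suc j)" using left_path_step[OF path Suc.prems] by simp
    moreover have "hs ! Suc j \<in> I" using Suc.prems left_path_subset[OF path] by (meson nth_mem subsetD)
    moreover have "P (hs ! j)" using Suc by simp
    ultimately show ?case using step by blast
  qed
  then show ?thesis using left_path_nonempty[OF path] by (simp add: last_conv_nth)
qed

locale rooted_map_context =
  fixes H :: "'a set" and \<sigma> \<alpha> :: "'a \<Rightarrow> 'a" and r :: 'a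
  assumes rooted: "rooted_map H \<sigma> \<alpha> r"
begin

lemma finite_H: "finite H"
  and sigma_permutes: "\<sigma> permutes H"
  and alpha_permutes: "\<alpha> permutes H"
  and alpha_neq: "h \<in> H \<Longrightarrow> \<alpha> h \<noteq> h"
  and alpha_alpha: "h \<in> H \<Longrightarrow> \<alpha> (\<alpha> h) = h"
  and root_in_H: "r \<in> H"
  using rooted unfolding rooted_map_def by auto

lemma alpha_in_H: "h \<in> H \<Longrightarrow> \<alpha> h \<in> H"
  using alpha_permutes by (simp add: permutes_in_image)

lemma sigma_funpow_in_H: "h \<in> H \<Longrightarrow> (\<sigma> ^^ k) h \<in> H"
  using permutes_in_funpow_image[OF sigma_permutes] .

lemma sigma_permutation: "permutation \<sigma>"
  using sigma_permutes finite_H permutation_permutes by blast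

definition alpha_stable :: "'a set \<Rightarrow> bool" where
  "alpha_stable S \<longleftrightarrow> S \<subseteq> H \<and> (\<forall>h\<in>S. \<alpha> h \<in> S)"

lemma alpha_stable_alpha_iff: "alpha_stable S \<Longrightarrow> h \<in> H \<Longrightarrow> \<alpha> h \<in> S \<longleftrightarrow> h \<in> S"
  unfolding alpha_stable_def using alpha_alpha by metis

abbreviation \<theta> :: "'a set \<Rightarrow> 'a \<Rightarrow> 'a" where "\<theta> S \<equiv> motion \<sigma> \<alpha> S"

abbreviation \<phi> :: "'a set \<Rightarrow> 'a \<Rightarrow> 'a" where "\<phi> S \<equiv> restr \<sigma> S \<circ> restr \<alpha> S"

abbreviation tour :: "'a set \<Rightarrow> 'a set" where "tour S \<equiv> forward_orbit (\<theta> S) r"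

abbreviation idx :: "'a set \<Rightarrow> 'a \<Rightarrow> nat" where "idx S \<equiv> appearance_index \<sigma> \<alpha> r S"

lemma motion_permutes:
  assumes "alpha_stable S"
  shows "\<theta> S permutes H"
proof -
  define g where "g h = (if h \<in> S then \<alpha> h else h)" for h
  have "g permutes H"
  proof (rule inj_imp_permutes[OF _ finite_H])
    show "inj_on g H"
      using assms alpha_alpha unfolding alpha_stable_def g_def inj_on_def by metis
    show "g h \<in> H" if "h \<in> H" for h using that alpha_in_H by (simp add: g_def)
    show "g h = h" if "h \<notin> H" for h using that assms by (auto simp: g_def alpha_stable_def)
  qed
  moreover have "\<theta> S = \<sigma> \<circ> g" by (auto simp: motion_def g_def)
  ultimately show ?thesis using permutes_compose sigma_permutes by metis
qed

lemma tour_subset: "alpha_stable S \<Longrightarrow> tour S \<subseteq> H"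
  using forward_orbit_subset[OF motion_permutes] root_in_H by blast

lemma tour_pred: "alpha_stable S \<Longrightarrow> \<theta> S y \<in> tour S \<Longrightarrow> y \<in> tour S"
  using forward_orbit_pred[OF motion_permutes finite_H] by blast

lemma motion_sigma_pred:
  "alpha_stable S \<Longrightarrow> z \<in> H \<Longrightarrow> \<theta> S (if z \<in> S then \<alpha> z else z) = \<sigma> z"
  using alpha_stable_alpha_iff alpha_alpha by (simp add: motion_def)

lemma restr_alpha: "alpha_stable S \<Longrightarrow> s \<in> S \<Longrightarrow> restr \<alpha> S s = \<alpha> s"
  unfolding restr_def alpha_stable_def
  by (subst Least_equality[where x = 1]) auto

text \<open>Between two consecutive visits of S, the motion function follows \<sigma> outside S; hence
  its successive returns to S are the steps of the face permutation of the submap.\<close>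

lemma motion_first_return:
  assumes "alpha_stable S" and "s \<in> S"
  obtains L where "0 < L" "(\<theta> S ^^ L) s = \<phi> S s" "\<phi> S s \<in> S"
    "\<And>i. 0 < i \<Longrightarrow> i < L \<Longrightarrow> (\<theta> S ^^ i) s \<notin> S"
proof -
  let ?a = "\<alpha> s"
  have a: "?a \<in> S" using assms unfolding alpha_stable_def by blast
  obtain m where m: "0 < m" "(\<sigma> ^^ m) ?a = ?a" using permutation_self[OF sigma_permutation] by blast
  define L where "L = (LEAST k. 0 < k \<and> (\<sigma> ^^ k) ?a \<in> S)"
  have L: "0 < L" "(\<sigma> ^^ L) ?a \<in> S"
    using LeastI[of "\<lambda>k. 0 < k \<and> (\<sigma> ^^ k) ?a \<in> S" m] m a unfolding L_def by auto
  have avoid: "(\<sigma> ^^ i) ?a \<notin> S" if "0 < i" "i < L" for i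
    using not_less_Least[of i "\<lambda>k. 0 < k \<and> (\<sigma> ^^ k) ?a \<in> S"] that unfolding L_def by blast
  have phi: "\<phi> S s = (\<sigma> ^^ L) ?a"
    using a restr_alpha[OF assms] unfolding restr_def L_def by simp
  have walk: "(\<theta> S ^^ i) s = (\<sigma> ^^ i) ?a" if "0 < i" "i \<le> L" for i
  proof -
    obtain j where j: "i = Suc j" using \<open>0 < i\<close> gr0_implies_Suc by blast
    have "(\<sigma> ^^ k) (\<sigma> ?a) \<notin> S" if "k < j" for k
      using avoid[of "Suc k"] that j \<open>i \<le> L\<close> by (simp add: funpow_swap1)
    then have "(\<theta> S ^^ j) (\<sigma> ?a) = (\<sigma> ^^ j) (\<sigma> ?a)" by (rule motion_funpow_avoiding)
    then show ?thesis using j \<open>s \<in> S\<close> by (simp add: funpow_Suc_right motion_def del: funpow.simps)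
  qed
  show thesis
  proof
    show "0 < L" "(\<theta> S ^^ L) s = \<phi> S s" "\<phi> S s \<in> S" using L walk phi by auto
    show "(\<theta> S ^^ i) s \<notin> S" if "0 < i" "i < L" for i using that walk avoid by simp
  qed
qed

lemma phi_funpow_if_motion_funpow:
  assumes stable: "alpha_stable S" and "s \<in> S" and "(\<theta> S ^^ N) s \<in> S"
  shows "\<exists>k. (\<phi> S ^^ k) s = (\<theta> S ^^ N) s"
  using assms(2,3)
proof (induction N arbitrary: s rule: less_induct)
  case (less N s)
  show ?case
  proof (cases "N = 0")
    case False
    obtain L where L: "0 < L" "(\<theta> S ^^ L) s = \<phi> S s" "\<phi> S s \<in> S"
      "\<And>i. 0 < i \<Longrightarrow> i < L \<Longrightarrow> (\<theta> S ^^ i) s \<notin> S"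
      using motion_first_return[OF stable less.prems(1)] by blast
    have "L \<le> N" using L(4)[of N] False less.prems(2) by force
    then have N: "(\<theta> S ^^ N) s = (\<theta> S ^^ (N - L)) (\<phi> S s)"
      using L(2) by (metis comp_apply funpow_add le_add_diff_inverse2)
    have "N - L < N" using L(1) False by simp
    moreover have "(\<theta> S ^^ (N - L)) (\<phi> S s) \<in> S" using N less.prems(2) by metis
    ultimately obtain k where "(\<phi> S ^^ k) (\<phi> S s) = (\<theta> S ^^ (N - L)) (\<phi> S s)"
      using less.IH L(3) by blast
    then have "(\<phi> S ^^ Suc k) s = (\<theta> S ^^ N) s" using N by (metis comp_apply funpow_Suc_right)
    then show ?thesis ..
  qed (auto intro: exI[of _ 0])
qed

lemma covered_map_cyclic:
  assumes "covered_map H \<sigma> \<alpha> r S"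
  shows "cyclic_on H (\<theta> S)"
proof -
  have stable: "alpha_stable S" using assms unfolding covered_map_def alpha_stable_def by blast
  have phi_cyclic: "cyclic_on S (\<phi> S)"
    using assms unfolding covered_map_def connecting_unicellular_def by blast
  consider "S = {}" "cyclic_on H \<sigma>" | "\<forall>h\<in>H. \<exists>k. (\<sigma> ^^ k) h \<in> S"
    using assms unfolding covered_map_def connecting_unicellular_def by blast
  then show ?thesis
  proof cases
    case 1
    then show ?thesis by (simp add: motion_def)
  next
    case 2
    then obtain s0 where s0: "s0 \<in> S" using root_in_H by blast
    define V where "V = forward_orbit (\<theta> S) s0"
    have phi_orbit: "(\<phi> S ^^ k) s0 \<in> S \<inter> V" for k
    proof (induction k)
      case (Suc k)
      then obtain L where L: "(\<theta> S ^^ L) ((\<phi> S ^^ k) s0) = \<phi> S ((\<phi> S ^^ k) s0)"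
        "\<phi> S ((\<phi> S ^^ k) s0) \<in> S"
        using motion_first_return[OF stable] by blast
      moreover have "(\<theta> S ^^ L) ((\<phi> S ^^ k) s0) \<in> V"
        using Suc.IH forward_orbit_funpow_closed[of _ "\<theta> S" s0 L] unfolding V_def by blast
      ultimately show ?case by (metis IntI comp_apply funpow.simps(2))
    qed (simp add: s0 V_def)
    have S_V: "S \<subseteq> V"
      using phi_orbit phi_cyclic s0 unfolding cyclic_on_def by (metis IntD2 subsetI)
    have V_pred: "y \<in> V" if "\<theta> S y \<in> V" for y
      using forward_orbit_pred[OF motion_permutes[OF stable] finite_H that[unfolded V_def]]
      unfolding V_def .
    have "H \<subseteq> V"
    proof
      fix h assume "h \<in> H"
      then obtain k where "(\<sigma> ^^ k) h \<in> S" using 2 by blast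
      then show "h \<in> V" using mem_if_sigma_funpow_mem[OF S_V V_pred] S_V by blast
    qed
    then show ?thesis
      using cyclic_on_if_forward_orbit[OF motion_permutes[OF stable] finite_H] unfolding V_def by blast
  qed
qed

lemma cyclic_imp_covered_map:
  assumes stable: "alpha_stable S" and cyclic: "cyclic_on H (\<theta> S)"
  shows "covered_map H \<sigma> \<alpha> r S"
proof -
  have connecting: "(\<forall>h\<in>H. \<exists>k. (\<sigma> ^^ k) h \<in> S) \<or> (S = {} \<and> cyclic_on H \<sigma>)"
  proof (cases "S = {}")
    case True
    then show ?thesis using cyclic by (simp add: motion_def)
  next
    case False
    then obtain s where s: "s \<in> S" by blast
    have "\<exists>k. (\<sigma> ^^ k) h \<in> S" if h: "h \<in> H" for h
    proof (rule ccontr)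
      assume avoid: "\<nexists>k. (\<sigma> ^^ k) h \<in> S"
      obtain k where "(\<theta> S ^^ k) h = s"
        using cyclic h s stable unfolding cyclic_on_def alpha_stable_def by blast
      then have "(\<sigma> ^^ k) h = s" using motion_funpow_avoiding[of k \<sigma> h S \<alpha>] avoid by auto
      then show False using avoid s by blast
    qed
    then show ?thesis by blast
  qed
  have phi_cyclic: "cyclic_on S (\<phi> S)"
    unfolding cyclic_on_def
  proof (intro ballI)
    fix s s' assume "s \<in> S" "s' \<in> S"
    moreover obtain N where "(\<theta> S ^^ N) s = s'"
      using cyclic calculation stable unfolding cyclic_on_def alpha_stable_def by blast
    ultimately show "\<exists>k. (\<phi> S ^^ k) s = s'" using phi_funpow_if_motion_funpow[OF stable] by metis
  qed
  show ?thesis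
    using stable connecting phi_cyclic transitive_on_if_cyclic_comp[OF phi_cyclic]
    unfolding covered_map_def connecting_unicellular_def alpha_stable_def by blast
qed

lemma covered_map_iff_tour: "covered_map H \<sigma> \<alpha> r S \<longleftrightarrow> alpha_stable S \<and> tour S = H"
proof
  assume covered: "covered_map H \<sigma> \<alpha> r S"
  then have stable: "alpha_stable S" unfolding covered_map_def alpha_stable_def by blast
  have "H \<subseteq> tour S"
    using covered_map_cyclic[OF covered] root_in_H unfolding cyclic_on_def forward_orbit_def by force
  then show "alpha_stable S \<and> tour S = H" using stable tour_subset by blast
next
  assume "alpha_stable S \<and> tour S = H"
  then show "covered_map H \<sigma> \<alpha> r S"
    using cyclic_imp_covered_map cyclic_on_if_forward_orbit[OF motion_permutes finite_H] by blast
qed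

lemma idx_le: "(\<theta> S ^^ k) r = h \<Longrightarrow> idx S h \<le> k"
  unfolding appearance_index_def by (rule Least_le)

lemma funpow_idx: "h \<in> tour S \<Longrightarrow> (\<theta> S ^^ idx S h) r = h"
  unfolding appearance_index_def forward_orbit_def by (auto intro: LeastI)

lemma idx_lt_card: "alpha_stable S \<Longrightarrow> h \<in> tour S \<Longrightarrow> idx S h < card H"
  unfolding appearance_index_def forward_orbit_def
  using funpow_least_index_lt_card[OF finite_H]
    permutes_in_funpow_image[OF motion_permutes root_in_H] by blast

lemma idx_motion:
  assumes stable: "alpha_stable S" and h: "h \<in> tour S" and "\<theta> S h \<noteq> r"
  shows "idx S (\<theta> S h) = Suc (idx S h)"
proof -
  have "(\<theta> S ^^ Suc (idx S h)) r = \<theta> S h" using funpow_idx[OF h] by simp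
  then have le: "idx S (\<theta> S h) \<le> Suc (idx S h)" by (rule idx_le)
  have reached: "(\<theta> S ^^ idx S (\<theta> S h)) r = \<theta> S h"
    using funpow_idx forward_orbit_funpow_closed[OF h, of 1] by simp
  show ?thesis
  proof (cases "idx S (\<theta> S h)")
    case 0
    then show ?thesis using reached \<open>\<theta> S h \<noteq> r\<close> by simp
  next
    case (Suc j)
    then have "\<theta> S ((\<theta> S ^^ j) r) = \<theta> S h" using reached by simp
    then have "(\<theta> S ^^ j) r = h" using permutes_inj[OF motion_permutes[OF stable]] by (auto dest: injD)
    then have "idx S h \<le> j" by (rule idx_le)
    then show ?thesis using le Suc by simp
  qed
qed

lemma covered_map_alpha_stable: "covered_map H \<sigma> \<alpha> r S \<Longrightarrow> alpha_stable S"
  and covered_map_tour: "covered_map H \<sigma> \<alpha> r S \<Longrightarrow> tour S = H"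
  using covered_map_iff_tour by blast+

lemma covered_map_funpow_in_H: "covered_map H \<sigma> \<alpha> r S \<Longrightarrow> (\<theta> S ^^ k) r \<in> H"
  using funpow_in_forward_orbit covered_map_tour by metis

lemma covered_map_funpow_idx: "covered_map H \<sigma> \<alpha> r S \<Longrightarrow> h \<in> H \<Longrightarrow> (\<theta> S ^^ idx S h) r = h"
  using funpow_idx covered_map_tour by metis

lemma covered_map_idx_lt_card: "covered_map H \<sigma> \<alpha> r S \<Longrightarrow> h \<in> H \<Longrightarrow> idx S h < card H"
  using idx_lt_card covered_map_alpha_stable covered_map_tour by metis

lemma idx_alpha_neq: "covered_map H \<sigma> \<alpha> r S \<Longrightarrow> h \<in> H \<Longrightarrow> idx S (\<alpha> h) \<noteq> idx S h"
  using covered_map_funpow_idx alpha_neq alpha_in_H by metis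

lemma mem_Delta_iff:
  assumes "covered_map H \<sigma> \<alpha> r S"
  shows "h \<in> Delta H \<sigma> \<alpha> r S \<longleftrightarrow> h \<in> H \<and> (h \<in> S \<longleftrightarrow> idx S (\<alpha> h) < idx S h)"
  using covered_map_alpha_stable[OF assms] idx_alpha_neq[OF assms, of h]
  unfolding Delta_def appears_before_def alpha_stable_def by auto

lemma idx_lt_alpha_if_first_visit:
  assumes covered: "covered_map H \<sigma> \<alpha> r S" and x: "(\<theta> S ^^ k) r = x"
    and first_visit: "\<And>j. j < k \<Longrightarrow> (\<theta> S ^^ j) r \<noteq> \<alpha> x"
  shows "idx S x < idx S (\<alpha> x)"
proof -
  have "x \<in> H" using x covered_map_funpow_in_H[OF covered] by blast
  then have "(\<theta> S ^^ idx S (\<alpha> x)) r = \<alpha> x"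
    using covered_map_funpow_idx[OF covered] alpha_in_H by blast
  then have "k \<le> idx S (\<alpha> x)" using first_visit by (meson not_le)
  then show ?thesis using idx_le[OF x] idx_alpha_neq[OF covered \<open>x \<in> H\<close>] by simp
qed

lemma oriented_map_iff: "oriented_map H \<alpha> I \<longleftrightarrow> I \<subseteq> H \<and> (\<forall>h\<in>H. \<alpha> h \<in> I \<longleftrightarrow> h \<notin> I)"
proof
  assume "oriented_map H \<alpha> I"
  then have I_H: "I \<subseteq> H" and img: "\<alpha> ` I = H - I" unfolding oriented_map_def by auto
  have "\<alpha> h \<in> I \<longleftrightarrow> h \<notin> I" if h: "h \<in> H" for h
  proof
    assume "\<alpha> h \<in> I"
    then have "\<alpha> (\<alpha> h) \<in> H - I" using img by blast
    then show "h \<notin> I" using alpha_alpha[OF h] by simp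
  next
    assume "h \<notin> I"
    then obtain i where "i \<in> I" "h = \<alpha> i" using img h by blast
    then show "\<alpha> h \<in> I" using alpha_alpha I_H by auto
  qed
  then show "I \<subseteq> H \<and> (\<forall>h\<in>H. \<alpha> h \<in> I \<longleftrightarrow> h \<notin> I)" using I_H by blast
next
  assume *: "I \<subseteq> H \<and> (\<forall>h\<in>H. \<alpha> h \<in> I \<longleftrightarrow> h \<notin> I)"
  have "\<alpha> ` I = H - I"
  proof (intro equalityI subsetI)
    show "x \<in> H - I" if "x \<in> \<alpha> ` I" for x
      using that * alpha_alpha alpha_in_H by fastforce
    show "x \<in> \<alpha> ` I" if "x \<in> H - I" for x
    proof
      show "x = \<alpha> (\<alpha> x)" using that alpha_alpha by simp
      show "\<alpha> x \<in> I" using that * by blast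
    qed
  qed
  then show "oriented_map H \<alpha> I" using * unfolding oriented_map_def by blast
qed

lemma Delta_oriented:
  assumes covered: "covered_map H \<sigma> \<alpha> r S"
  shows "oriented_map H \<alpha> (Delta H \<sigma> \<alpha> r S)"
  unfolding oriented_map_iff
proof (intro conjI ballI)
  show "Delta H \<sigma> \<alpha> r S \<subseteq> H" using mem_Delta_iff[OF covered] by blast
  fix h assume h: "h \<in> H"
  have "idx S (\<alpha> h) \<noteq> idx S h" by (rule idx_alpha_neq[OF covered h])
  then show "\<alpha> h \<in> Delta H \<sigma> \<alpha> r S \<longleftrightarrow> h \<notin> Delta H \<sigma> \<alpha> r S"
    using h alpha_in_H alpha_alpha[OF h] alpha_stable_alpha_iff[OF covered_map_alpha_stable[OF covered] h]
    unfolding mem_Delta_iff[OF covered] by auto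
qed

lemma idx_sigma_outgoing:
  assumes covered: "covered_map H \<sigma> \<alpha> r S" and z: "z \<in> H - Delta H \<sigma> \<alpha> r S"
    and "\<sigma> z \<noteq> r"
  shows "idx S (\<sigma> z) = Suc (max (idx S z) (idx S (\<alpha> z)))"
proof -
  have stable: "alpha_stable S" by (rule covered_map_alpha_stable[OF covered])
  let ?w = "if z \<in> S then \<alpha> z else z"
  have w: "\<theta> S ?w = \<sigma> z" using motion_sigma_pred[OF stable] z by blast
  have "?w \<in> H" using z alpha_in_H by (cases "z \<in> S") auto
  then have "?w \<in> tour S" unfolding covered_map_tour[OF covered] .
  then have "idx S (\<theta> S ?w) = Suc (idx S ?w)"
    by (rule idx_motion[OF stable]) (simp only: w \<open>\<sigma> z \<noteq> r\<close> not_False_eq_True)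
  then have "idx S (\<sigma> z) = Suc (idx S ?w)" unfolding w .
  moreover have "idx S ?w = max (idx S z) (idx S (\<alpha> z))"
  proof -
    have "z \<in> S \<longleftrightarrow> \<not> idx S (\<alpha> z) < idx S z" using z mem_Delta_iff[OF covered, of z] by blast
    then show ?thesis using idx_alpha_neq[OF covered, of z] z by (auto simp: max_def)
  qed
  ultimately show ?thesis by simp
qed

text \<open>The outgoing half-edges met while rotating around a vertex are visited ever later by the
  tour, so the rotation must stop at the root or at an incoming half-edge visited later.\<close>

lemma Delta_parent:
  assumes covered: "covered_map H \<sigma> \<alpha> r S" and h: "h \<in> Delta H \<sigma> \<alpha> r S"
  shows "\<exists>q>0. (\<forall>p<q. (\<sigma> ^^ p) (\<alpha> h) \<in> H - Delta H \<sigma> \<alpha> r S) \<and>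
    ((\<sigma> ^^ q) (\<alpha> h) = r \<or>
     (\<sigma> ^^ q) (\<alpha> h) \<in> Delta H \<sigma> \<alpha> r S \<and> idx S h < idx S ((\<sigma> ^^ q) (\<alpha> h)))"
    (is "\<exists>q>0. ?out q \<and> _")
proof (rule ccontr)
  assume none: "\<not> ?thesis"
  let ?I = "Delta H \<sigma> \<alpha> r S" and ?y = "\<lambda>p. (\<sigma> ^^ p) (\<alpha> h)"
  have oriented: "oriented_map H \<alpha> ?I" by (rule Delta_oriented[OF covered])
  have hH: "h \<in> H" using h mem_Delta_iff[OF covered] by blast
  have y_in_H: "?y p \<in> H" for p using sigma_funpow_in_H alpha_in_H hH by blast
  have grow: "?out (Suc p) \<and> idx S h + p \<le> max (idx S (?y p)) (idx S (\<alpha> (?y p)))" for p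
  proof (induction p)
    case 0
    have "\<alpha> h \<notin> ?I" using h hH oriented unfolding oriented_map_iff by blast
    then show ?case using hH alpha_in_H alpha_alpha[OF hH] by auto
  next
    case (Suc p)
    have "?y (Suc p) \<noteq> r" using none Suc.IH by blast
    then have idx_eq: "idx S (?y (Suc p)) = Suc (max (idx S (?y p)) (idx S (\<alpha> (?y p))))"
      using idx_sigma_outgoing[OF covered] Suc.IH by simp
    then have "idx S h < idx S (?y (Suc p))" using Suc.IH by simp
    then have "?y (Suc p) \<notin> ?I" using none Suc.IH zero_less_Suc by blast
    then show ?case using Suc.IH idx_eq y_in_H by (auto simp: less_Suc_eq)
  qed
  have "max (idx S (?y (card H))) (idx S (\<alpha> (?y (card H)))) < card H"
    using covered_map_idx_lt_card[OF covered] y_in_H alpha_in_H by simp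
  then show False using grow[of "card H"] by (simp add: max_def split: if_splits)
qed

lemma Delta_left_connected:
  assumes covered: "covered_map H \<sigma> \<alpha> r S"
  shows "left_connected H \<sigma> \<alpha> r (Delta H \<sigma> \<alpha> r S)"
  unfolding left_connected_def
proof
  let ?I = "Delta H \<sigma> \<alpha> r S"
  fix h assume "h \<in> ?I"
  then show "\<exists>hs. left_path H \<sigma> \<alpha> r ?I hs \<and> last hs = h"
  proof (induction "card H - idx S h" arbitrary: h rule: less_induct)
    case less
    obtain q where q: "q > 0" "\<forall>p<q. (\<sigma> ^^ p) (\<alpha> h) \<in> H - ?I"
      "(\<sigma> ^^ q) (\<alpha> h) = r \<or> (\<sigma> ^^ q) (\<alpha> h) \<in> ?I \<and> idx S h < idx S ((\<sigma> ^^ q) (\<alpha> h))"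
      using Delta_parent[OF covered less.prems] by blast
    let ?p = "(\<sigma> ^^ q) (\<alpha> h)"
    have step: "left_step H \<sigma> \<alpha> ?I ?p h" unfolding left_step_def using q(1,2) by blast
    show ?case
    proof (cases "?p = r")
      case True
      then show ?thesis using left_path_singleton[OF less.prems] step by fastforce
    next
      case False
      then have p: "?p \<in> ?I" "idx S h < idx S ?p" using q(3) by auto
      moreover have "idx S ?p < card H"
        using p covered_map_idx_lt_card[OF covered] mem_Delta_iff[OF covered] by blast
      ultimately obtain hs where "left_path H \<sigma> \<alpha> r ?I hs" "last hs = ?p"
        using less.hyps[of ?p] by force
      then show ?thesis using left_path_snoc less.prems step by fastforce
    qed
  qed
qed

lemma covered_maps_agree_on_tour:
  assumes c1: "covered_map H \<sigma> \<alpha> r S1" and c2: "covered_map H \<sigma> \<alpha> r S2"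
    and eq: "Delta H \<sigma> \<alpha> r S1 = Delta H \<sigma> \<alpha> r S2"
  shows "(\<theta> S2 ^^ k) r = (\<theta> S1 ^^ k) r \<and> ((\<theta> S1 ^^ k) r \<in> S1 \<longleftrightarrow> (\<theta> S1 ^^ k) r \<in> S2)"
proof (induction k rule: less_induct)
  case (less k)
  have walk: "(\<theta> S2 ^^ k) r = (\<theta> S1 ^^ k) r"
    using motion_funpow_cong[of k \<sigma> \<alpha> S1 r S2] less by blast
  define x where "x = (\<theta> S1 ^^ k) r"
  have xH: "x \<in> H" using covered_map_funpow_in_H[OF c1] unfolding x_def .
  have "x \<in> S1 \<longleftrightarrow> x \<in> S2"
  proof (cases "\<exists>j<k. (\<theta> S1 ^^ j) r = \<alpha> x")
    case True
    then obtain j where j: "j < k" "(\<theta> S1 ^^ j) r = \<alpha> x" by blast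
    then have "\<alpha> x \<in> S1 \<longleftrightarrow> \<alpha> x \<in> S2" using less.IH[OF j(1)] by simp
    then show ?thesis
      using alpha_stable_alpha_iff[OF covered_map_alpha_stable[OF c1] xH]
        alpha_stable_alpha_iff[OF covered_map_alpha_stable[OF c2] xH] by simp
  next
    case False
    then have first1: "(\<theta> S1 ^^ j) r \<noteq> \<alpha> x" if "j < k" for j using that by blast
    have first2: "(\<theta> S2 ^^ j) r \<noteq> \<alpha> x" if "j < k" for j
      using first1[OF that] less.IH[OF that] by simp
    have "idx S1 x < idx S1 (\<alpha> x)"
      using idx_lt_alpha_if_first_visit[OF c1 x_def[symmetric] first1] .
    then have "x \<in> S1 \<longleftrightarrow> x \<notin> Delta H \<sigma> \<alpha> r S1" using mem_Delta_iff[OF c1, of x] xH by simp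
    moreover have "idx S2 x < idx S2 (\<alpha> x)"
      using idx_lt_alpha_if_first_visit[OF c2 _ first2] walk x_def by simp
    then have "x \<in> S2 \<longleftrightarrow> x \<notin> Delta H \<sigma> \<alpha> r S2" using mem_Delta_iff[OF c2, of x] xH by simp
    ultimately show ?thesis using eq by simp
  qed
  then show ?case using walk x_def by simp
qed

lemma Delta_inj:
  assumes c1: "covered_map H \<sigma> \<alpha> r S1" and c2: "covered_map H \<sigma> \<alpha> r S2"
    and eq: "Delta H \<sigma> \<alpha> r S1 = Delta H \<sigma> \<alpha> r S2"
  shows "S1 = S2"
proof -
  have "h \<in> S1 \<longleftrightarrow> h \<in> S2" if "h \<in> tour S1" for h
    using that covered_maps_agree_on_tour[OF assms] unfolding forward_orbit_def by auto
  moreover have "S1 \<subseteq> tour S1" "S2 \<subseteq> tour S1"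
    using c1 c2 covered_map_alpha_stable unfolding covered_map_tour[OF c1] alpha_stable_def by auto
  ultimately show ?thesis by blast
qed

definition flip_edge :: "'a set \<Rightarrow> 'a \<Rightarrow> 'a set" where
  "flip_edge S x = (if x \<in> S then S - {x, \<alpha> x} else S \<union> {x, \<alpha> x})"

lemma flip_edge_stable:
  assumes stable: "alpha_stable S" and x: "x \<in> H"
  shows "alpha_stable (flip_edge S x)"
proof -
  let ?E = "{x, \<alpha> x}"
  have E: "?E \<subseteq> H" "\<forall>h\<in>?E. \<alpha> h \<in> ?E" using x alpha_in_H alpha_alpha by auto
  have "alpha_stable (S - ?E)"
  proof -
    have "\<alpha> h \<notin> ?E" if h: "h \<in> H" "h \<notin> ?E" for h
    proof
      assume "\<alpha> h \<in> ?E"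
      then have "\<alpha> (\<alpha> h) = \<alpha> x \<or> \<alpha> (\<alpha> h) = \<alpha> (\<alpha> x)" by auto
      then show False using h alpha_alpha[OF h(1)] alpha_alpha[OF x] by auto
    qed
    then show ?thesis using stable unfolding alpha_stable_def by blast
  qed
  moreover have "alpha_stable (S \<union> ?E)" using stable E unfolding alpha_stable_def by blast
  ultimately show ?thesis unfolding flip_edge_def by simp
qed

lemma mem_flip_edge: "z \<notin> {x, \<alpha> x} \<Longrightarrow> z \<in> flip_edge S x \<longleftrightarrow> z \<in> S"
  and self_mem_flip_edge: "x \<in> flip_edge S x \<longleftrightarrow> x \<notin> S"
  unfolding flip_edge_def by auto

text \<open>This is what Delta S = I demands of S: a half-edge reached by the tour before its
  partner lies in S exactly when it is outgoing.\<close>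

definition consistent_upto :: "'a set \<Rightarrow> 'a set \<Rightarrow> nat \<Rightarrow> bool" where
  "consistent_upto I S K \<longleftrightarrow> (\<forall>j<K. (\<forall>i<j. (\<theta> S ^^ i) r \<noteq> \<alpha> ((\<theta> S ^^ j) r)) \<longrightarrow>
     ((\<theta> S ^^ j) r \<in> S \<longleftrightarrow> (\<theta> S ^^ j) r \<notin> I))"

lemma consistent_upto_exists: "\<exists>S. alpha_stable S \<and> consistent_upto I S K"
proof (induction K)
  case 0
  have "alpha_stable {}" unfolding alpha_stable_def by simp
  then show ?case unfolding consistent_upto_def by blast
next
  case (Suc K)
  then obtain S where stable: "alpha_stable S" and cons: "consistent_upto I S K" by blast
  define x where "x = (\<theta> S ^^ K) r"
  show ?case
  proof (cases "consistent_upto I S (Suc K)")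
    case False
    then have fresh: "\<forall>i<K. (\<theta> S ^^ i) r \<noteq> \<alpha> x" and wrong: "\<not> (x \<in> S \<longleftrightarrow> x \<notin> I)"
      using cons unfolding consistent_upto_def x_def by (auto simp: less_Suc_eq)
    have new: "(\<theta> S ^^ i) r \<noteq> x" if "i < K" for i
      using cons fresh wrong that unfolding consistent_upto_def by (metis order.strict_trans)
    have xH: "x \<in> H" using tour_subset[OF stable] unfolding x_def by auto
    txt \<open>Neither half-edge of the edge of x occurs before step K, so flipping that edge leaves the
      first K steps of the tour unchanged.\<close>
    let ?S' = "flip_edge S x"
    have walk: "(\<theta> ?S' ^^ j) r = (\<theta> S ^^ j) r" if "j \<le> K" for j
      using motion_funpow_cong[of j \<sigma> \<alpha> S r ?S'] mem_flip_edge new fresh that by simp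
    have "consistent_upto I ?S' (Suc K)"
      unfolding consistent_upto_def
    proof (rule allI, rule impI)
      fix j assume j: "j < Suc K"
      show "(\<forall>i<j. (\<theta> ?S' ^^ i) r \<noteq> \<alpha> ((\<theta> ?S' ^^ j) r)) \<longrightarrow>
        ((\<theta> ?S' ^^ j) r \<in> ?S' \<longleftrightarrow> (\<theta> ?S' ^^ j) r \<notin> I)"
      proof (cases "j = K")
        case True
        then show ?thesis using walk wrong self_mem_flip_edge unfolding x_def by auto
      next
        case False
        then have "j < K" using j by simp
        then show ?thesis
          using cons walk mem_flip_edge new fresh unfolding consistent_upto_def by auto
      qed
    qed
    then show ?thesis using flip_edge_stable[OF stable xH] by blast
  qed (use stable in blast)
qed

context
  fixes I S
  assumes oriented: "oriented_map H \<alpha> I" and stable: "alpha_stable S"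
    and consistent: "consistent_upto I S (card H)"
begin

lemma consistent_first_visit:
  assumes "h \<in> tour S" and "\<And>i. i < idx S h \<Longrightarrow> (\<theta> S ^^ i) r \<noteq> \<alpha> h"
  shows "h \<in> S \<longleftrightarrow> h \<notin> I"
proof -
  let ?j = "idx S h"
  have "?j < card H" by (rule idx_lt_card[OF stable assms(1)])
  then have "(\<forall>i<?j. (\<theta> S ^^ i) r \<noteq> \<alpha> ((\<theta> S ^^ ?j) r)) \<longrightarrow>
      ((\<theta> S ^^ ?j) r \<in> S \<longleftrightarrow> (\<theta> S ^^ ?j) r \<notin> I)"
    using consistent unfolding consistent_upto_def by blast
  then show ?thesis using assms(2) funpow_idx[OF assms(1)] by simp
qed

lemma unvisited_partner:
  assumes "h \<in> tour S" and "\<alpha> h \<notin> tour S"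
  shows "h \<in> S \<longleftrightarrow> h \<notin> I"
proof (rule consistent_first_visit[OF assms(1)])
  fix i assume "i < idx S h"
  show "(\<theta> S ^^ i) r \<noteq> \<alpha> h" using assms(2) funpow_in_forward_orbit[of i "\<theta> S" r] by metis
qed

lemma sigma_outgoing_unvisited:
  assumes "z \<in> H - I" and "z \<notin> tour S"
  shows "\<sigma> z \<notin> tour S"
proof
  assume "\<sigma> z \<in> tour S"
  then have w: "(if z \<in> S then \<alpha> z else z) \<in> tour S"
    using motion_sigma_pred[OF stable] tour_pred[OF stable] assms(1) by (metis DiffD1)
  show False
  proof (cases "z \<in> S")
    case True
    have "\<alpha> z \<in> I" using assms(1) oriented unfolding oriented_map_iff by blast
    moreover have "\<alpha> z \<in> S" using True stable unfolding alpha_stable_def by blast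
    ultimately show False
      using w True unvisited_partner[of "\<alpha> z"] alpha_alpha assms by auto
  qed (use w assms(2) in simp)
qed

lemma sigma_funpow_outgoing_unvisited:
  assumes "z \<notin> tour S" and "\<And>i. i < p \<Longrightarrow> (\<sigma> ^^ i) z \<in> H - I"
  shows "(\<sigma> ^^ p) z \<notin> tour S"
  using assms(2)
proof (induction p)
  case (Suc p)
  have "(\<sigma> ^^ p) z \<notin> tour S" using Suc.prems by (intro Suc.IH) simp
  moreover have "(\<sigma> ^^ p) z \<in> H - I" using Suc.prems[of p] by simp
  ultimately show ?case using sigma_outgoing_unvisited by simp
qed (use assms(1) in simp)

lemma left_step_unvisited:
  assumes h: "h \<in> I" "h \<notin> tour S" and step: "left_step H \<sigma> \<alpha> I prev h"
  shows "prev \<notin> tour S"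
proof -
  obtain q where q: "q > 0" "prev = (\<sigma> ^^ q) (\<alpha> h)" "\<forall>p<q. (\<sigma> ^^ p) (\<alpha> h) \<in> H - I"
    using step unfolding left_step_def by blast
  have hH: "h \<in> H" using h oriented unfolding oriented_map_def by blast
  have out: "\<alpha> h \<in> H - I" using q(3)[rule_format, OF q(1)] by simp
  have first_step: "\<sigma> (\<alpha> h) \<notin> tour S"
  proof (cases "\<alpha> h \<in> tour S")
    case True
    then have "\<alpha> h \<in> S" using unvisited_partner[OF True] alpha_alpha[OF hH] h(2) out by simp
    then have "h \<in> S" using alpha_stable_alpha_iff[OF stable hH] by simp
    then have "\<theta> S h = \<sigma> (\<alpha> h)" by (simp add: motion_def)
    then show ?thesis using h(2) tour_pred[OF stable, of h] by auto
  next
    case False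
    then show ?thesis by (rule sigma_outgoing_unvisited[OF out])
  qed
  have shift: "(\<sigma> ^^ i) (\<sigma> (\<alpha> h)) = (\<sigma> ^^ Suc i) (\<alpha> h)" for i
    by (simp only: funpow_Suc_right comp_apply)
  have "(\<sigma> ^^ (q - 1)) (\<sigma> (\<alpha> h)) \<notin> tour S"
  proof (rule sigma_funpow_outgoing_unvisited[OF first_step])
    fix i assume "i < q - 1"
    then show "(\<sigma> ^^ i) (\<sigma> (\<alpha> h)) \<in> H - I" using q(3)[rule_format, of "Suc i"] shift by simp
  qed
  then show ?thesis using q(1,2) shift[of "q - 1"] by simp
qed

lemma tour_eq_if_left_connected:
  assumes lc: "left_connected H \<sigma> \<alpha> r I"
  shows "tour S = H"
proof -
  have I_visited: "I \<subseteq> tour S"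
  proof
    fix h assume "h \<in> I"
    then obtain hs where "left_path H \<sigma> \<alpha> r I hs" "last hs = h"
      using lc unfolding left_connected_def by blast
    then show "h \<in> tour S"
      using left_path_propagate[where P = "\<lambda>x. x \<in> tour S"] left_step_unvisited
        self_in_forward_orbit by fastforce
  qed
  have "x \<in> tour S" if x: "x \<in> H - I" for x
  proof (rule ccontr)
    assume "x \<notin> tour S"
    have unvisited: "(\<sigma> ^^ p) x \<notin> tour S" for p
    proof (induction p)
      case (Suc p)
      have "(\<sigma> ^^ p) x \<in> H - I" using Suc I_visited sigma_funpow_in_H x by blast
      then show ?case using Suc sigma_outgoing_unvisited by simp
    qed (use \<open>x \<notin> tour S\<close> in simp)
    have "\<alpha> x \<in> I" using x oriented unfolding oriented_map_iff by blast
    then obtain hs where path: "left_path H \<sigma> \<alpha> r I hs" and last: "last hs = \<alpha> x"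
      using lc unfolding left_connected_def by blast
    obtain prev where "prev = r \<or> prev \<in> I" and step: "left_step H \<sigma> \<alpha> I prev (\<alpha> x)"
      using left_path_last_step[OF path] unfolding last by blast
    then have "prev \<in> tour S" using I_visited by auto
    moreover obtain q where "prev = (\<sigma> ^^ q) (\<alpha> (\<alpha> x))" using step unfolding left_step_def by blast
    ultimately show False using unvisited alpha_alpha x by simp
  qed
  then show ?thesis using I_visited tour_subset[OF stable] oriented unfolding oriented_map_def by blast
qed

lemma consistent_earlier_half_edge:
  assumes "h \<in> tour S" and earlier: "idx S h < idx S (\<alpha> h)"
  shows "h \<in> S \<longleftrightarrow> h \<notin> I"
proof (rule consistent_first_visit[OF assms(1)])
  fix i assume "i < idx S h"
  show "(\<theta> S ^^ i) r \<noteq> \<alpha> h"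
  proof
    assume "(\<theta> S ^^ i) r = \<alpha> h"
    then have "idx S (\<alpha> h) \<le> i" by (rule idx_le)
    then show False using \<open>i < idx S h\<close> earlier by simp
  qed
qed

lemma Delta_eq_if_tour_eq:
  assumes tour: "tour S = H"
  shows "Delta H \<sigma> \<alpha> r S = I"
proof -
  have covered: "covered_map H \<sigma> \<alpha> r S" using covered_map_iff_tour stable tour by blast
  have "h \<in> Delta H \<sigma> \<alpha> r S \<longleftrightarrow> h \<in> I" if h: "h \<in> H" for h
  proof (cases "idx S h < idx S (\<alpha> h)")
    case True
    then have "h \<in> S \<longleftrightarrow> h \<notin> I" using consistent_earlier_half_edge h tour by simp
    then show ?thesis using True h mem_Delta_iff[OF covered, of h] by auto
  next
    case False
    then have lt: "idx S (\<alpha> h) < idx S h" using idx_alpha_neq[OF covered h] by simp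
    then have "\<alpha> h \<in> S \<longleftrightarrow> \<alpha> h \<notin> I"
      using consistent_earlier_half_edge[of "\<alpha> h"] h tour alpha_in_H alpha_alpha by simp
    moreover have "\<alpha> h \<in> I \<longleftrightarrow> h \<notin> I" using h oriented unfolding oriented_map_iff by blast
    ultimately show ?thesis
      using lt h alpha_stable_alpha_iff[OF stable h] mem_Delta_iff[OF covered, of h] by auto
  qed
  moreover have "Delta H \<sigma> \<alpha> r S \<subseteq> H" "I \<subseteq> H"
    using mem_Delta_iff[OF covered] oriented unfolding oriented_map_def by auto
  ultimately show ?thesis by blast
qed

end

lemma Delta_surj:
  assumes "oriented_map H \<alpha> I" and "left_connected H \<sigma> \<alpha> r I"
  shows "\<exists>S. covered_map H \<sigma> \<alpha> r S \<and> Delta H \<sigma> \<alpha> r S = I"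
proof -
  obtain S where "alpha_stable S" "consistent_upto I S (card H)"
    using consistent_upto_exists by blast
  then show ?thesis
    using assms tour_eq_if_left_connected Delta_eq_if_tour_eq covered_map_iff_tour by blast
qed

end

theorem mainTheorem2:
  fixes H :: "'a set" and \<sigma> \<alpha> :: "'a \<Rightarrow> 'a" and r :: 'a
  assumes "rooted_map H \<sigma> \<alpha> r"
  shows "bij_betw (Delta H \<sigma> \<alpha> r)
           {S. covered_map H \<sigma> \<alpha> r S}
           {I. oriented_map H \<alpha> I \<and> left_connected H \<sigma> \<alpha> r I}"
proof -
  interpret rooted_map_context H \<sigma> \<alpha> r by (rule rooted_map_context.intro) fact
  show ?thesis
    unfolding bij_betw_def
  proof
    show "inj_on (Delta H \<sigma> \<alpha> r) {S. covered_map H \<sigma> \<alpha> r S}"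
      by (rule inj_onI) (use Delta_inj in blast)
    show "Delta H \<sigma> \<alpha> r ` {S. covered_map H \<sigma> \<alpha> r S}
        = {I. oriented_map H \<alpha> I \<and> left_connected H \<sigma> \<alpha> r I}"
      using Delta_oriented Delta_left_connected Delta_surj by fastforce
  qed
qed

end
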